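(* Let $Z$ be a non-empty GTA zone and let $R\subseteq X_F$ be a set of future clocks such that for each $x\in R$ there is a valuation $v_x\in Z$ with $v_x(x)=-\infty$. Then there exist valuations $v\in Z$ such that $v(x)=-\infty$ for all $x\in R$.
   Context: $X=X_F\uplus X_H$ is a finite set of clocks (future clocks $X_F$, history clocks $X_H$) plus a constant clock $0$. $\overline{\mathbb{R}}=\mathbb{R}\cup\{\pm\infty\}$ with $(+\infty)+\alpha=+\infty$, $(-\infty)+\beta=-\infty$ for $\beta\neq+\infty$, $-(\pm\infty)=\mp\infty$. A valuation is $v:X\cup\{0\}\to\overline{\mathbb{R}}$ with $v(0)=0$, history clocks in $\mathbb{R}_{\ge 0}\cup\{+\infty\}$, future clocks in $\mathbb{R}_{\le0}\cup\{-\infty\}$. A GTA zone is a set of valuations defined by a conjunction of constraints $y-x\triangleleft c$ with $x,y\in X\cup\{0\}$, $c\in\mathbb{Z}\cup\{-\infty,+\infty\}$, ${\triangleleft}\in\{<,\le\}$, where $v\models y-x\triangleleft c$ iff $v(y)-v(x)\triangleleft c$. *)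

theory Defs
  imports "HOL-Library.Extended_Real"
begin

text \<open>Valuations map proper clocks to extended reals (ereal: its addition has
  infinity + a = infinity and -infinity + b = -infinity for b not infinity,
  and x - y = x + (-y), exactly the paper's conventions).\<close>

datatype 'c cterm = Zero | Clk 'c

type_synonym 'c valuation = "'c \<Rightarrow> ereal"

fun cval :: "'c valuation \<Rightarrow> 'c cterm \<Rightarrow> ereal" where
  "cval v Zero = 0"
| "cval v (Clk x) = v x"

text \<open>A valuation over future clocks XF and history clocks XH.
  Values of clocks outside XF \<union> XH are fixed to 0 (irrelevant junk).\<close>
definition valid_val :: "'c set \<Rightarrow> 'c set \<Rightarrow> 'c valuation \<Rightarrow> bool" where
  "valid_val XF XH v \<longleftrightarrow>
     (\<forall>x\<in>XH. 0 \<le> v x) \<and> (\<forall>x\<in>XF. v x \<le> 0) \<and> (\<forall>x. x \<notin> XF \<union> XH \<longrightarrow> v x = 0)"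

text \<open>A constraint y - x \<triangleleft> c, represented as (y, x, strict, c):
  strict = True means <, strict = False means \<le>.\<close>
type_synonym 'c constr = "'c cterm \<times> 'c cterm \<times> bool \<times> ereal"

definition is_bound :: "ereal \<Rightarrow> bool" where
  "is_bound c \<longleftrightarrow> c = -\<infinity> \<or> c = \<infinity> \<or> (\<exists>k::int. c = ereal (of_int k))"

fun cterm_in :: "'c set \<Rightarrow> 'c set \<Rightarrow> 'c cterm \<Rightarrow> bool" where
  "cterm_in XF XH Zero = True"
| "cterm_in XF XH (Clk x) = (x \<in> XF \<union> XH)"

definition wf_constr :: "'c set \<Rightarrow> 'c set \<Rightarrow> 'c constr \<Rightarrow> bool" where
  "wf_constr XF XH g \<longleftrightarrow> (case g of (y, x, s, c) \<Rightarrow>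
      cterm_in XF XH y \<and> cterm_in XF XH x \<and> is_bound c)"

definition sat :: "'c valuation \<Rightarrow> 'c constr \<Rightarrow> bool" where
  "sat v g \<longleftrightarrow> (case g of (y, x, s, c) \<Rightarrow>
      (if s then cval v y - cval v x < c else cval v y - cval v x \<le> c))"

definition gta_zone :: "'c set \<Rightarrow> 'c set \<Rightarrow> 'c valuation set \<Rightarrow> bool" where
  "gta_zone XF XH Z \<longleftrightarrow> (\<exists>C. finite C \<and> (\<forall>g\<in>C. wf_constr XF XH g) \<and>
      Z = {v. valid_val XF XH v \<and> (\<forall>g\<in>C. sat v g)})"

end

theory Submission
  imports Defs
begin

text \<open>GTA zones are closed under the pointwise minimum of valuations: if b is the smaller
  of b, b' then min a a' - min b b' is at most a - b, so every difference constraint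
  satisfied by v and w is satisfied by inf v w. Hence the pointwise minimum of the
  witnesses v_x, x \<in> R, lies in Z and is -\<infinity> on all of R.\<close>

lemma ereal_min_diff_le_disj:
  fixes a a' b b' :: ereal
  shows "min a a' - min b b' \<le> a - b \<or> min a a' - min b b' \<le> a' - b'"
proof (cases "b \<le> b'")
  case True
  then have "min a a' - min b b' \<le> a - b"
    by (intro ereal_minus_mono) auto
  then show ?thesis ..
next
  case False
  then have "min a a' - min b b' \<le> a' - b'"
    by (intro ereal_minus_mono) auto
  then show ?thesis ..
qed

lemma cval_inf: "cval (inf v w) t = min (cval v t) (cval w t)"
  by (cases t) (auto simp: inf_min)

lemma sat_inf:
  assumes "sat v g" and "sat w g"
  shows "sat (inf v w) g"
proof -
  obtain y x s c where g: "g = (y, x, s, c)"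
    by (cases g) auto
  have "min (cval v y) (cval w y) - min (cval v x) (cval w x) \<le> cval v y - cval v x \<or>
        min (cval v y) (cval w y) - min (cval v x) (cval w x) \<le> cval w y - cval w x"
    by (rule ereal_min_diff_le_disj)
  then show ?thesis
    using assms unfolding g sat_def cval_inf
    by (cases s) (auto dest: order.trans order.strict_trans1)
qed

lemma valid_val_inf:
  assumes "valid_val XF XH v" and "valid_val XF XH w"
  shows "valid_val XF XH (inf v w)"
  using assms unfolding valid_val_def by (auto simp: inf_min min.coboundedI1)

lemma gta_zone_inf_closed:
  assumes "gta_zone XF XH Z" and "v \<in> Z" and "w \<in> Z"
  shows "inf v w \<in> Z"
proof -
  obtain C where "Z = {v. valid_val XF XH v \<and> (\<forall>g\<in>C. sat v g)}"
    using assms(1) unfolding gta_zone_def by blast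
  then show ?thesis
    using assms(2,3) by (auto intro: valid_val_inf sat_inf)
qed

lemma inf_closed_ex_bot_on_finite:
  fixes S :: "('a \<Rightarrow> 'b :: {semilattice_inf, order_bot}) set"
  assumes "S \<noteq> {}" and inf_closed: "\<And>f g. f \<in> S \<Longrightarrow> g \<in> S \<Longrightarrow> inf f g \<in> S"
    and "finite R" and "\<forall>x\<in>R. \<exists>f\<in>S. f x = bot"
  shows "\<exists>f\<in>S. \<forall>x\<in>R. f x = bot"
  using assms(3,4)
proof (induction R rule: finite_induct)
  case empty
  then show ?case using \<open>S \<noteq> {}\<close> by blast
next
  case (insert a R)
  then obtain f g where "f \<in> S" "\<forall>x\<in>R. f x = bot" "g \<in> S" "g a = bot"
    by blast
  then have "inf f g \<in> S" "\<forall>x\<in>insert a R. inf f g x = bot"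
    by (auto intro: inf_closed inf_absorb2 inf_absorb1)
  then show ?case by blast
qed

theorem lemma12:
  fixes XF XH :: "'c set" and Z :: "'c valuation set" and R :: "'c set"
  assumes "finite XF" and "finite XH" and "XF \<inter> XH = {}"
    and "gta_zone XF XH Z" and "Z \<noteq> {}"
    and "R \<subseteq> XF"
    and "\<forall>x\<in>R. \<exists>v\<in>Z. v x = -\<infinity>"
  shows "\<exists>v\<in>Z. \<forall>x\<in>R. v x = -\<infinity>"
proof -
  have "finite R"
    using assms(1,6) by (rule finite_subset[rotated])
  then show ?thesis
    using inf_closed_ex_bot_on_finite[of Z R] gta_zone_inf_closed[OF assms(4)] assms(5,7)
    by (simp add: bot_ereal_def)
qed

end
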